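(* Consider $n=\sum_{i=1}^L n_i$ component lifetimes $T_j^{(i)}$, $j=1,\dots,n_i$, $i=1,\dots,L$ ($L\ge1$), where components of type $i$ have common reliability function $\bar F_i$, the lifetimes within each type are exchangeable, and the joint reliability function is given by a survival copula $\hat C$: $$P(T_j^{(i)}>t_j^{(i)},\ j=1,\dots,n_i,\ i=1,\dots,L)=\hat C\big(\bar F_1(t_1^{(1)}),\dots,\bar F_1(t_{n_1}^{(1)}),\dots,\bar F_L(t_1^{(L)}),\dots,\bar F_L(t_{n_L}^{(L)})\big).$$ Fix $i\in\{1,\dots,L\}$, integers $0\le m_k\le n_k$ for $k\ne i$ and $0\le m_i\le n_i-1$, $t\ge 0$ and $\delta>0$, and define $$A_{\mathbf{m}}^{(i)}(t,\delta)=P\Big(T_1^{(k)}>t,\dots,T_{m_k}^{(k)}>t,\ T_{m_k+1}^{(k)}\le t,\dots,T_{n_k}^{(k)}\le t \text{ for all } k\neq i;\ t<T_1^{(i)}\le t+\delta,\ T_2^{(i)}>t,\dots,T_{m_i+1}^{(i)}>t,\ T_{m_i+2}^{(i)}\le t,\dots,T_{n_i}^{(i)}\le t\Big).$$ Then $$A_{\mathbf{m}}^{(i)}(t, \delta)=\sum_{j_1=0}^{n_1-m_1}\cdots\sum_{j_i=0}^{n_i-m_i-1}\cdots\sum_{j_L=0}^{n_L-m_L}(-1)^{j_1+\cdots + j_L}\binom{n_1-m_1}{j_1}\cdots \binom{n_i-m_i-1}{j_i}\cdots\binom{n_L-m_L}{j_L}\Big[\hat{C}(\underbrace{\bar{F}_1(t)}_{m_1+j_1},\underbrace{1}_{n_1-(m_1+j_1)},\dots,\underbrace{\bar{F}_i(t)}_{m_i+j_i+1},\underbrace{1}_{n_i-(m_i+j_i+1)},\dots,\underbrace{\bar{F}_L(t)}_{m_L+j_L},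 \underbrace{1}_{n_L-(m_L+j_L)})-\hat{C}(\underbrace{\bar{F}_1(t)}_{m_1+j_1},\underbrace{1}_{n_1-(m_1+j_1)},\dots,\underbrace{\bar{F}_i(t)}_{m_i+j_i},\bar{F}_i(t+\delta),\underbrace{1}_{n_i-(m_i+j_i+1)}, \dots,\underbrace{\bar{F}_L(t)}_{m_L+j_L},\underbrace{1}_{n_L-(m_L+j_L)})\Big].$$
   Context: In the arguments of $\hat C$, the notation $\underbrace{u}_{m}$ denotes $m$ consecutive repetitions of the value $u$; the arguments are listed block by block, the $k$th block consisting of the $n_k$ arguments associated with the components of type $k$ (by within-type exchangeability, the order of arguments inside a block is immaterial). *)

theory Defs
  imports "HOL-Probability.Probability" "HOL-Combinatorics.Permutations"
begin

definition comp_index :: "nat \<Rightarrow> (nat \<Rightarrow> nat) \<Rightarrow> (nat \<times> nat) set" where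
  "comp_index L n = (SIGMA k:{1..L}. {1..n k})"

definition copula :: "'i set \<Rightarrow> (('i \<Rightarrow> real) \<Rightarrow> real) \<Rightarrow> bool" where
  "copula I C \<longleftrightarrow>
     (\<exists>\<mu>. prob_space \<mu> \<and> sets \<mu> = sets (PiM I (\<lambda>_. borel)) \<and>
        (\<forall>k\<in>I. \<forall>x\<in>{0..1}. measure \<mu> {y\<in>space \<mu>. y k \<le> x} = x) \<and>
        (\<forall>u. (\<forall>k\<in>I. u k \<in> {0..1}) \<longrightarrow>
              C u = measure \<mu> {y\<in>space \<mu>. \<forall>k\<in>I. y k \<le> u k}))"

definition exchangeable_within_types ::
  "'a measure \<Rightarrow> nat \<Rightarrow> (nat \<Rightarrow> nat) \<Rightarrow> (nat \<Rightarrow> nat \<Rightarrow> 'a \<Rightarrow> real) \<Rightarrow> bool" where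
  "exchangeable_within_types M L n T \<longleftrightarrow>
     (\<forall>p. (\<forall>k\<in>{1..L}. p k permutes {1..n k}) \<longrightarrow>
        distr M (PiM (comp_index L n) (\<lambda>_. borel))
          (\<lambda>\<omega>. \<lambda>x\<in>comp_index L n. T (fst x) (p (fst x) (snd x)) \<omega>)
      = distr M (PiM (comp_index L n) (\<lambda>_. borel))
          (\<lambda>\<omega>. \<lambda>x\<in>comp_index L n. T (fst x) (snd x) \<omega>))"

end

theory Submission
  imports Defs
begin

(*
  Put c k = m k for k ~= i and c i = m i + 1.  The event in question is the event that in every type
  k exactly the first c k components survive t and T_1^(i) > t, minus the same event with
  T_1^(i) > t + delta.  For each of the two, inclusion-exclusion over the set Q of those components
  that ought to fail by t but survive it turns the probability into an alternating sum of joint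
  survival probabilities.  By exchangeability within types such a probability depends only on how
  many components of each type have to survive, so these can be taken to be the first ones and the
  probability is a value of the survival copula.  Grouping the sets Q by these numbers produces the
  binomial coefficients.
*)

lemma (in prob_space) prob_Int_INT_compl_incl_excl:
  assumes "finite R" "B \<in> events" "\<And>r. r \<in> R \<Longrightarrow> A r \<in> events"
  shows "prob (B \<inter> (\<Inter>r\<in>R. space M - A r)) = (\<Sum>Q\<in>Pow R. (-1) ^ card Q * prob (B \<inter> \<Inter>(A ` Q)))"
proof -
  interpret Incl_Excl "\<lambda>S. S \<in> events" prob
    by unfold_locales (auto simp: disjnt_def intro: finite_measure_Union)
  have union: "prob (\<Union>r\<in>R. B \<inter> A r) =
      (\<Sum>Q | Q \<subseteq> R \<and> Q \<noteq> {}. (-1) ^ (card Q + 1) * prob (B \<inter> \<Inter>(A ` Q)))"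
  proof -
    have "\<Inter>((\<lambda>r. B \<inter> A r) ` Q) = B \<inter> \<Inter>(A ` Q)" if "Q \<noteq> {}" for Q
      using that by auto
    then show ?thesis
      using restricted_indexed[of R "\<lambda>r. B \<inter> A r"] assms by (auto intro!: sum.cong)
  qed
  have "B \<inter> (\<Inter>r\<in>R. space M - A r) = B - (\<Union>r\<in>R. B \<inter> A r)"
    using sets.sets_into_space[OF assms(2)] by auto
  moreover have "(\<Union>r\<in>R. B \<inter> A r) \<in> events"
    using assms by auto
  ultimately have "prob (B \<inter> (\<Inter>r\<in>R. space M - A r)) = prob B - prob (\<Union>r\<in>R. B \<inter> A r)"
    using assms(2) by (auto intro!: finite_measure_Diff)
  moreover have "Pow R = insert {} {Q. Q \<subseteq> R \<and> Q \<noteq> {}}"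
    by auto
  then have "(\<Sum>Q\<in>Pow R. (-1) ^ card Q * prob (B \<inter> \<Inter>(A ` Q))) =
      prob B + (\<Sum>Q | Q \<subseteq> R \<and> Q \<noteq> {}. (-1) ^ card Q * prob (B \<inter> \<Inter>(A ` Q)))"
    using assms(1) by simp
  ultimately show ?thesis
    unfolding union by (simp add: sum_negf[symmetric])
qed

lemma (in prob_space) tendsto_prob_Int_all_gt_neg:
  fixes X :: "'i \<Rightarrow> 'a \<Rightarrow> real"
  assumes "finite V" "A \<in> events" "\<And>r. r \<in> V \<Longrightarrow> X r \<in> borel_measurable M"
  shows "(\<lambda>N. prob (A \<inter> {\<omega>\<in>space M. \<forall>r\<in>V. - real N < X r \<omega>})) \<longlonglongrightarrow> prob A"
proof -
  define B where "B N = A \<inter> {\<omega>\<in>space M. \<forall>r\<in>V. - real N < X r \<omega>}" for N :: nat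
  have "range B \<subseteq> events"
    unfolding B_def using assms by (auto intro!: sets.sets_Collect_finite_All)
  moreover have "incseq B"
    unfolding B_def incseq_def by force
  moreover have "(\<Union>N. B N) = A"
  proof (intro set_eqI iffI)
    fix \<omega> assume \<omega>: "\<omega> \<in> A"
    have "\<forall>\<^sub>F N in sequentially. \<forall>r\<in>V. - X r \<omega> < real N"
      using filterlim_real_sequentially[unfolded filterlim_at_top_dense] assms(1)
      by (intro eventually_ball_finite) auto
    then obtain N where "\<forall>r\<in>V. - X r \<omega> < real N"
      by (auto simp: eventually_sequentially)
    then have "\<omega> \<in> B N"
      using \<omega> sets.sets_into_space[OF assms(2)] by (force simp: B_def)
    then show "\<omega> \<in> (\<Union>N. B N)"
      by blast
  qed (auto simp: B_def)
  ultimately show ?thesis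
    using finite_Lim_measure_incseq[of B] unfolding B_def by simp
qed

lemma ex_permutes_image:
  assumes "finite S" "A \<subseteq> S" "B \<subseteq> S" "card A = card B"
  shows "\<exists>p. p permutes S \<and> p ` A = B"
proof -
  have "finite A" "finite B"
    using assms finite_subset by auto
  then obtain f where f: "bij_betw f A B"
    using finite_same_card_bij[of A B] assms(4) by auto
  have "card (S - A) = card (S - B)"
    using assms \<open>finite A\<close> \<open>finite B\<close> by (simp add: card_Diff_subset)
  then obtain g where g: "bij_betw g (S - A) (S - B)"
    using finite_same_card_bij[of "S - A" "S - B"] assms(1) by auto
  define p where "p x = (if x \<in> A then f x else if x \<in> S then g x else x)" for x
  have "bij_betw (\<lambda>x. if x \<in> A then f x else g x) S S"
    using bij_betw_disjoint_Un[OF f g] assms(2,3) by (simp add: Un_absorb1)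
  then have "bij_betw p S S"
    by (rule bij_betw_cong[THEN iffD1, rotated]) (simp add: p_def)
  then have "p permutes S"
    by (rule bij_imp_permutes) (use assms(2) in \<open>auto simp: p_def\<close>)
  moreover have "p ` A = B"
    using f by (auto simp: p_def bij_betw_def)
  ultimately show ?thesis
    by blast
qed

lemma ex_permutes_image_pointed:
  assumes "finite S" "A \<subseteq> S" "B \<subseteq> S" "card A = card B" "a \<in> A" "b \<in> B"
  shows "\<exists>p. p permutes S \<and> p ` A = B \<and> p a = b"
proof -
  obtain p where p: "p permutes S" "p ` A = B"
    using ex_permutes_image[OF assms(1-4)] by blast
  have "p a \<in> B"
    using p(2) assms(5) by blast
  then have "Transposition.transpose (p a) b \<circ> p permutes S"
    using assms(3,6) by (intro permutes_compose[OF p(1)] permutes_swap_id) auto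
  moreover have "(Transposition.transpose (p a) b \<circ> p) ` A = B"
    unfolding image_comp[symmetric] p(2) using \<open>p a \<in> B\<close> assms(6) by simp
  ultimately show ?thesis
    by force
qed

lemma sum_Pow_Sigma_by_counts:
  fixes g :: "('k \<Rightarrow> nat) \<Rightarrow> 'b::semiring_1"
  assumes "finite K" "\<And>k. k \<in> K \<Longrightarrow> finite (R k)"
  shows "(\<Sum>Q\<in>Pow (Sigma K R). g (\<lambda>k\<in>K. card {j. (k, j) \<in> Q}))
       = (\<Sum>c\<in>PiE K (\<lambda>k. {0..card (R k)}). of_nat (\<Prod>k\<in>K. card (R k) choose c k) * g c)"
proof -
  have bij: "bij_betw (Sigma K) (PiE K (\<lambda>k. Pow (R k))) (Pow (Sigma K R))"
    by (rule bij_betw_byWitness[where f' = "\<lambda>Q. \<lambda>k\<in>K. {j. (k, j) \<in> Q}"])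
       (auto simp: PiE_iff fun_eq_iff extensional_def)
  have fibre: "{F \<in> PiE K (\<lambda>k. Pow (R k)). (\<lambda>k\<in>K. card (F k)) = c}
      = PiE K (\<lambda>k. {B. B \<subseteq> R k \<and> card B = c k})" if "c \<in> PiE K (\<lambda>k. {0..card (R k)})" for c
    using that by (auto simp: PiE_iff fun_eq_iff extensional_def)
  have counts: "(\<lambda>F. \<lambda>k\<in>K. card (F k)) ` PiE K (\<lambda>k. Pow (R k)) \<subseteq> PiE K (\<lambda>k. {0..card (R k)})"
  proof (rule image_subsetI)
    fix F assume "F \<in> PiE K (\<lambda>k. Pow (R k))"
    then have "card (F k) \<le> card (R k)" if "k \<in> K" for k
      using that assms(2) by (intro card_mono) (auto simp: PiE_iff)
    then show "(\<lambda>k\<in>K. card (F k)) \<in> PiE K (\<lambda>k. {0..card (R k)})"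
      by auto
  qed
  have "(\<Sum>Q\<in>Pow (Sigma K R). g (\<lambda>k\<in>K. card {j. (k, j) \<in> Q}))
      = (\<Sum>F\<in>PiE K (\<lambda>k. Pow (R k)). g (\<lambda>k\<in>K. card (F k)))"
    by (subst sum.reindex_bij_betw[OF bij, symmetric]) (auto intro!: sum.cong arg_cong[where f = g])
  also have "\<dots> = (\<Sum>c\<in>PiE K (\<lambda>k. {0..card (R k)}).
      \<Sum>F\<in>{F \<in> PiE K (\<lambda>k. Pow (R k)). (\<lambda>k\<in>K. card (F k)) = c}. g (\<lambda>k\<in>K. card (F k)))"
    using assms by (intro sum.group[OF _ _ counts, symmetric] finite_PiE) auto
  also have "\<dots> = (\<Sum>c\<in>PiE K (\<lambda>k. {0..card (R k)}). of_nat (\<Prod>k\<in>K. card (R k) choose c k) * g c)"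
  proof (intro sum.cong refl)
    fix c assume c: "c \<in> PiE K (\<lambda>k. {0..card (R k)})"
    have "(\<Sum>F\<in>{F \<in> PiE K (\<lambda>k. Pow (R k)). (\<lambda>k\<in>K. card (F k)) = c}. g (\<lambda>k\<in>K. card (F k)))
        = (\<Sum>F\<in>{F \<in> PiE K (\<lambda>k. Pow (R k)). (\<lambda>k\<in>K. card (F k)) = c}. g c)"
      by (intro sum.cong) auto
    also have "\<dots> = of_nat (card (PiE K (\<lambda>k. {B. B \<subseteq> R k \<and> card B = c k}))) * g c"
      by (simp add: fibre[OF c])
    also have "card (PiE K (\<lambda>k. {B. B \<subseteq> R k \<and> card B = c k})) = (\<Prod>k\<in>K. card (R k) choose c k)"
      using assms by (simp add: card_PiE n_subsets)
    finally show "(\<Sum>F\<in>{F \<in> PiE K (\<lambda>k. Pow (R k)). (\<lambda>k\<in>K. card (F k)) = c}. g (\<lambda>k\<in>K. card (F k)))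
        = of_nat (\<Prod>k\<in>K. card (R k) choose c k) * g c" .
  qed
  finally show ?thesis .
qed

lemma Ball_raised_threshold_iff:
  fixes t a :: "'a::order"
  assumes "(i, 1) \<in> S" "t \<le> a"
  shows "(\<forall>(k, j)\<in>S. (if (k, j) = (i, 1) then a else t) < X k j) \<longleftrightarrow> a < X i 1 \<and> (\<forall>(k, j)\<in>S. t < X k j)"
proof
  assume raised: "\<forall>(k, j)\<in>S. (if (k, j) = (i, 1) then a else t) < X k j"
  then have "a < X i 1"
    using bspec[OF raised assms(1)] by simp
  moreover have "t < X k j" if "(k, j) \<in> S" for k j
    using bspec[OF raised that] assms(2) by (auto split: if_splits intro: le_less_trans)
  ultimately show "a < X i 1 \<and> (\<forall>(k, j)\<in>S. t < X k j)"
    by blast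
qed auto

lemma Ball_split_first:
  fixes L :: nat and n :: "nat \<Rightarrow> nat"
  assumes "i \<in> {1..L}" "1 \<le> n i"
  shows "(\<forall>k\<in>{1..L}. \<forall>j\<in>{1..n k}. P k j)
    \<longleftrightarrow> (\<forall>k\<in>{1..L} - {i}. \<forall>j\<in>{1..n k}. P k j) \<and> P i 1 \<and> (\<forall>j\<in>{2..n i}. P i j)"
proof
  assume "\<forall>k\<in>{1..L}. \<forall>j\<in>{1..n k}. P k j"
  moreover have "1 \<in> {1..n i}" "{2..n i} \<subseteq> {1..n i}"
    using assms(2) by auto
  ultimately show "(\<forall>k\<in>{1..L} - {i}. \<forall>j\<in>{1..n k}. P k j) \<and> P i 1 \<and> (\<forall>j\<in>{2..n i}. P i j)"
    using assms(1) by blast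
next
  assume parts: "(\<forall>k\<in>{1..L} - {i}. \<forall>j\<in>{1..n k}. P k j) \<and> P i 1 \<and> (\<forall>j\<in>{2..n i}. P i j)"
  show "\<forall>k\<in>{1..L}. \<forall>j\<in>{1..n k}. P k j"
  proof (intro ballI)
    fix k j assume "k \<in> {1..L}" "j \<in> {1..n k}"
    then show "P k j"
      using parts by (cases "k = i"; cases "j = 1") auto
  qed
qed

lemma finite_comp_index: "finite (comp_index L n)"
  unfolding comp_index_def by auto

lemma copula_cong:
  assumes "copula I C" "\<And>r. r \<in> I \<Longrightarrow> u r = v r" "\<And>r. r \<in> I \<Longrightarrow> u r \<in> {0..1}"
  shows "C u = C v"
proof -
  obtain \<mu> where C: "\<And>w. (\<forall>r\<in>I. w r \<in> {0..1}) \<Longrightarrow> C w = measure \<mu> {y\<in>space \<mu>. \<forall>r\<in>I. y r \<le> w r}"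
    using assms(1) unfolding copula_def by blast
  have "C u = measure \<mu> {y\<in>space \<mu>. \<forall>r\<in>I. y r \<le> u r}"
    using C assms(3) by blast
  also have "\<dots> = C v"
    using C[of v] assms(2,3) by force
  finally show ?thesis .
qed

lemma copula_Lipschitz:
  assumes "copula I C" "finite I" "\<And>r. r \<in> I \<Longrightarrow> u r \<in> {0..1}" "\<And>r. r \<in> I \<Longrightarrow> v r \<in> {0..1}"
  shows "\<bar>C u - C v\<bar> \<le> (\<Sum>r\<in>I. \<bar>u r - v r\<bar>)"
proof -
  obtain \<mu> where "prob_space \<mu>" and sets_\<mu>: "sets \<mu> = sets (PiM I (\<lambda>_. borel))"
    and uniform: "\<And>r x. r \<in> I \<Longrightarrow> x \<in> {0..1} \<Longrightarrow> measure \<mu> {y\<in>space \<mu>. y r \<le> x} = x"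
    and C: "\<And>w. (\<forall>r\<in>I. w r \<in> {0..1}) \<Longrightarrow> C w = measure \<mu> {y\<in>space \<mu>. \<forall>r\<in>I. y r \<le> w r}"
    using assms(1) unfolding copula_def by blast
  interpret \<mu>: prob_space \<mu> by fact
  have le_event: "{y\<in>space \<mu>. y r \<le> x} \<in> sets \<mu>" if "r \<in> I" for r x
    unfolding sets_\<mu> sets_eq_imp_space_eq[OF sets_\<mu>] using that by measurable
  have one_sided: "C w - C w' \<le> (\<Sum>r\<in>I. \<bar>w r - w' r\<bar>)"
    if w: "\<And>r. r \<in> I \<Longrightarrow> w r \<in> {0..1}" and w': "\<And>r. r \<in> I \<Longrightarrow> w' r \<in> {0..1}" for w w'
  proof -
    define D where "D z = {y\<in>space \<mu>. \<forall>r\<in>I. y r \<le> z r}" for z :: "'a \<Rightarrow> real"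
    define G where "G r = {y\<in>space \<mu>. y r \<le> w r} - {y\<in>space \<mu>. y r \<le> w' r}" for r
    have D_event: "D z \<in> sets \<mu>" for z
      unfolding D_def using le_event assms(2) by (intro sets.sets_Collect_finite_All) auto
    have G_event: "G r \<in> sets \<mu>" if "r \<in> I" for r
      using le_event that by (auto simp: G_def)
    have G_measure: "measure \<mu> (G r) \<le> \<bar>w r - w' r\<bar>" if "r \<in> I" for r
    proof -
      have "{y\<in>space \<mu>. y r \<le> w r} \<inter> {y\<in>space \<mu>. y r \<le> w' r} = {y\<in>space \<mu>. y r \<le> min (w r) (w' r)}"
        by auto
      then have "measure \<mu> (G r) = w r - min (w r) (w' r)"
        using uniform[OF that] w[OF that] w'[OF that] le_event[OF that]
        by (simp add: G_def \<mu>.finite_measure_Diff' min_def)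
      then show ?thesis
        by linarith
    qed
    have "C w - C w' = measure \<mu> (D w) - measure \<mu> (D w')"
      using C w w' by (simp add: D_def)
    also have "\<dots> \<le> measure \<mu> (D w - D w')"
      using \<mu>.finite_measure_Diff'[OF D_event D_event, of w w'] \<mu>.finite_measure_mono[of "D w \<inter> D w'" "D w'"] D_event
      by auto
    also have "\<dots> \<le> measure \<mu> (\<Union>r\<in>I. G r)"
      using G_event assms(2) by (intro \<mu>.finite_measure_mono) (auto simp: D_def G_def)
    also have "\<dots> \<le> (\<Sum>r\<in>I. measure \<mu> (G r))"
      using G_event assms(2) by (intro \<mu>.finite_measure_subadditive_finite) auto
    also have "\<dots> \<le> (\<Sum>r\<in>I. \<bar>w r - w' r\<bar>)"
      using G_measure by (rule sum_mono)
    finally show ?thesis .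
  qed
  have "C u - C v \<le> (\<Sum>r\<in>I. \<bar>u r - v r\<bar>)"
    using assms(3,4) by (rule one_sided)
  moreover have "C v - C u \<le> (\<Sum>r\<in>I. \<bar>v r - u r\<bar>)"
    using assms(4,3) by (rule one_sided)
  moreover have "(\<Sum>r\<in>I. \<bar>v r - u r\<bar>) = (\<Sum>r\<in>I. \<bar>u r - v r\<bar>)"
    by (rule sum.cong[OF refl abs_minus_commute])
  ultimately show ?thesis
    by (simp add: abs_le_iff)
qed

lemma tendsto_copula:
  assumes "copula I C" "finite I" "\<And>r. r \<in> I \<Longrightarrow> u r \<in> {0..1}" "\<And>N r. r \<in> I \<Longrightarrow> v N r \<in> {0..1}"
    and "\<And>r. r \<in> I \<Longrightarrow> (\<lambda>N. v N r) \<longlonglongrightarrow> u r"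
  shows "(\<lambda>N. C (v N)) \<longlonglongrightarrow> C u"
proof -
  have bound: "\<bar>C (v N) - C u\<bar> \<le> (\<Sum>r\<in>I. \<bar>v N r - u r\<bar>)" for N
    by (rule copula_Lipschitz[OF assms(1,2)]) (use assms(3,4) in blast)+
  have "(\<lambda>N. \<Sum>r\<in>I. \<bar>v N r - u r\<bar>) \<longlonglongrightarrow> (\<Sum>r\<in>I. \<bar>u r - u r\<bar>)"
    using assms(5) by (intro tendsto_intros)
  then have "(\<lambda>N. \<Sum>r\<in>I. \<bar>v N r - u r\<bar>) \<longlonglongrightarrow> 0"
    by simp
  then have "(\<lambda>N. C (v N) - C u) \<longlonglongrightarrow> 0"
    by (rule Lim_null_comparison[rotated]) (simp add: bound)
  then show ?thesis
    by (rule LIM_zero_cancel)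
qed

locale survival_copula_model = prob_space M
  for M :: "'a measure" +
  fixes L :: nat and n :: "nat \<Rightarrow> nat" and T :: "nat \<Rightarrow> nat \<Rightarrow> 'a \<Rightarrow> real"
    and Fbar :: "nat \<Rightarrow> real \<Rightarrow> real" and Chat :: "(nat \<times> nat \<Rightarrow> real) \<Rightarrow> real"
  assumes measurable_T: "\<And>k j. (k, j) \<in> comp_index L n \<Longrightarrow> T k j \<in> borel_measurable M"
    and Fbar_eq: "\<And>k j s. (k, j) \<in> comp_index L n \<Longrightarrow> Fbar k s = prob {\<omega>\<in>space M. T k j \<omega> > s}"
    and copula_Chat: "copula (comp_index L n) Chat"
    and prob_survival_all: "\<And>s. prob {\<omega>\<in>space M. \<forall>(k, j)\<in>comp_index L n. T k j \<omega> > s k j}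
                                 = Chat (\<lambda>(k, j). Fbar k (s k j))"
begin

lemma Fbar_in_unit: "(k, j) \<in> comp_index L n \<Longrightarrow> Fbar k s \<in> {0..1}"
  using Fbar_eq by simp

lemma events_comp_index:
  assumes "U \<subseteq> comp_index L n" "\<And>k j. (k, j) \<in> U \<Longrightarrow> Measurable.pred borel (P k j)"
  shows "{\<omega>\<in>space M. \<forall>(k, j)\<in>U. P k j (T k j \<omega>)} \<in> events"
proof -
  have "{\<omega>\<in>space M. P k j (T k j \<omega>)} \<in> events" if "(k, j) \<in> U" for k j
    using measurable_compose[OF measurable_T assms(2)] assms(1) that by (auto simp: pred_def)
  then show ?thesis
    using finite_subset[OF assms(1) finite_comp_index]
    by (auto intro!: sets.sets_Collect_finite_All simp: case_prod_unfold)
qed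

lemma Fbar_tendsto_1:
  assumes "(k, j) \<in> comp_index L n"
  shows "(\<lambda>N. Fbar k (- real N)) \<longlonglongrightarrow> 1"
proof -
  have "(\<lambda>N. prob (space M \<inter> {\<omega>\<in>space M. \<forall>r\<in>{(k, j)}. - real N < T k j \<omega>})) \<longlonglongrightarrow> prob (space M)"
    using measurable_T[OF assms] by (intro tendsto_prob_Int_all_gt_neg) auto
  moreover have "space M \<inter> {\<omega>\<in>space M. \<forall>r\<in>{(k, j)}. - real N < T k j \<omega>} = {\<omega>\<in>space M. T k j \<omega> > - real N}"
    for N
    by auto
  ultimately show ?thesis
    unfolding Fbar_eq[OF assms] prob_space by simp
qed

(* The hypothesis on Chat constrains all components at once: unconstrained components get the
   threshold -N, and N tends to infinity on both sides (by monotone continuity of the measure and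
   Lipschitz continuity of the copula). *)
lemma prob_survival_eq_Chat:
  assumes "U \<subseteq> comp_index L n"
  shows "prob {\<omega>\<in>space M. \<forall>(k, j)\<in>U. x k j < T k j \<omega>}
       = Chat (\<lambda>(k, j). if (k, j) \<in> U then Fbar k (x k j) else 1)"
proof -
  define E where "E = {\<omega>\<in>space M. \<forall>(k, j)\<in>U. x k j < T k j \<omega>}"
  define s where "s N k j = (if (k, j) \<in> U then x k j else - real N)" for N :: nat and k j
  have "E \<in> events"
    unfolding E_def using assms by (rule events_comp_index) simp
  then have "(\<lambda>N. prob (E \<inter> {\<omega>\<in>space M. \<forall>r\<in>comp_index L n - U. - real N < T (fst r) (snd r) \<omega>}))
      \<longlonglongrightarrow> prob E"
    using measurable_T by (intro tendsto_prob_Int_all_gt_neg) (auto simp: finite_comp_index)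
  moreover have "E \<inter> {\<omega>\<in>space M. \<forall>r\<in>comp_index L n - U. - real N < T (fst r) (snd r) \<omega>}
      = {\<omega>\<in>space M. \<forall>(k, j)\<in>comp_index L n. s N k j < T k j \<omega>}" for N
    using assms by (auto simp: E_def s_def case_prod_unfold)
  ultimately have "(\<lambda>N. Chat (\<lambda>(k, j). Fbar k (s N k j))) \<longlonglongrightarrow> prob E"
    by (simp add: prob_survival_all)
  moreover have "(\<lambda>N. Chat (\<lambda>(k, j). Fbar k (s N k j)))
      \<longlonglongrightarrow> Chat (\<lambda>(k, j). if (k, j) \<in> U then Fbar k (x k j) else 1)"
    by (rule tendsto_copula[OF copula_Chat finite_comp_index])
       (auto simp: s_def Fbar_in_unit[simplified] Fbar_tendsto_1 split: prod.splits)
  ultimately show ?thesis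
    unfolding E_def by (rule LIMSEQ_unique)
qed

definition survivors_event :: "nat \<Rightarrow> (nat \<Rightarrow> nat) \<Rightarrow> real \<Rightarrow> real \<Rightarrow> 'a set" where
  "survivors_event i c t a = {\<omega>\<in>space M. a < T i 1 \<omega> \<and>
     (\<forall>k\<in>{1..L}. \<forall>j\<in>{1..n k}. (j \<le> c k \<longrightarrow> t < T k j \<omega>) \<and> (c k < j \<longrightarrow> T k j \<omega> \<le> t))}"

lemma sets_survivors_event:
  assumes "i \<in> {1..L}" "1 \<le> n i"
  shows "survivors_event i c t a \<in> events"
proof -
  have "T i 1 \<in> borel_measurable M"
    using measurable_T[of i 1] assms by (simp add: comp_index_def)
  then have "{\<omega>\<in>space M. a < T i 1 \<omega>} \<in> events"
    by measurable
  moreover have "{\<omega>\<in>space M. \<forall>(k, j)\<in>comp_index L n. (j \<le> c k \<longrightarrow> t < T k j \<omega>) \<and> (c k < j \<longrightarrow> T k j \<omega> \<le> t)}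
      \<in> events"
    by (rule events_comp_index[OF subset_refl]) measurable
  ultimately have "{\<omega>\<in>space M. a < T i 1 \<omega>} \<inter>
      {\<omega>\<in>space M. \<forall>(k, j)\<in>comp_index L n. (j \<le> c k \<longrightarrow> t < T k j \<omega>) \<and> (c k < j \<longrightarrow> T k j \<omega> \<le> t)}
      \<in> events"
    by (rule sets.Int)
  also have "{\<omega>\<in>space M. a < T i 1 \<omega>} \<inter>
      {\<omega>\<in>space M. \<forall>(k, j)\<in>comp_index L n. (j \<le> c k \<longrightarrow> t < T k j \<omega>) \<and> (c k < j \<longrightarrow> T k j \<omega> \<le> t)}
      = survivors_event i c t a"
    by (auto simp: survivors_event_def comp_index_def)
  finally show ?thesis .
qed

end

locale exchangeable_survival_copula_model = survival_copula_model +
  assumes exchangeable: "exchangeable_within_types M L n T"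
begin

lemma prob_survival_permute:
  assumes "\<And>k. k \<in> {1..L} \<Longrightarrow> p k permutes {1..n k}" "U \<subseteq> comp_index L n"
  shows "prob {\<omega>\<in>space M. \<forall>(k, j)\<in>U. x k j < T k (p k j) \<omega>}
       = prob {\<omega>\<in>space M. \<forall>(k, j)\<in>U. x k j < T k j \<omega>}"
proof -
  let ?I = "comp_index L n"
  let ?N = "PiM ?I (\<lambda>_. borel) :: (nat \<times> nat \<Rightarrow> real) measure"
  let ?X = "\<lambda>q \<omega>. \<lambda>r\<in>?I. T (fst r) (q (fst r) (snd r)) \<omega>"
  define A where "A = {y\<in>space ?N. \<forall>(k, j)\<in>U. x k j < y (k, j)}"
  have "finite U"
    using assms(2) finite_comp_index finite_subset by blast
  then have A: "A \<in> sets ?N"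
    unfolding A_def using assms(2) by (auto intro!: sets.sets_Collect_finite_All simp: case_prod_unfold)
  have p_in: "(k, p k j) \<in> ?I" if "(k, j) \<in> ?I" for k j
    using that assms(1) permutes_in_image[OF assms(1)] unfolding comp_index_def by auto
  have X_measurable: "?X q \<in> measurable M ?N" if "\<And>k j. (k, j) \<in> ?I \<Longrightarrow> (k, q k j) \<in> ?I" for q
    using that by (intro measurable_restrict) (auto intro: measurable_T)
  have preimage: "?X q -` A \<inter> space M = {\<omega>\<in>space M. \<forall>(k, j)\<in>U. x k j < T k (q k j) \<omega>}" for q
    using assms(2) unfolding A_def by (auto simp: space_PiM)
  have "prob {\<omega>\<in>space M. \<forall>(k, j)\<in>U. x k j < T k (p k j) \<omega>} = measure (distr M ?N (?X p)) A"
    using measure_distr[OF X_measurable A, of p] p_in by (simp add: preimage)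
  also have "\<dots> = measure (distr M ?N (?X (\<lambda>k j. j))) A"
    using exchangeable assms(1) unfolding exchangeable_within_types_def by simp
  also have "\<dots> = prob {\<omega>\<in>space M. \<forall>(k, j)\<in>U. x k j < T k j \<omega>}"
    using measure_distr[OF X_measurable A, of "\<lambda>k j. j"] preimage[of "\<lambda>k j. j"] by simp
  finally show ?thesis .
qed

(* Exchangeability moves the components of W k to positions 1, ..., d k of type k, with (i, 1)
   moved to position d i. *)
lemma prob_survival_canonical:
  assumes i: "i \<in> {1..L}" and W: "\<And>k. k \<in> {1..L} \<Longrightarrow> W k \<subseteq> {1..n k}" and "1 \<in> W i"
    and d: "\<And>k. k \<in> {1..L} \<Longrightarrow> card (W k) = d k"
  shows "prob {\<omega>\<in>space M. \<forall>(k, j)\<in>Sigma {1..L} W. (if (k, j) = (i, 1) then a else h k) < T k j \<omega>}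
       = Chat (\<lambda>(k, j). if (k, j) = (i, d i) then Fbar i a else if j \<le> d k then Fbar k (h k) else 1)"
proof -
  have d_le: "d k \<le> n k" if "k \<in> {1..L}" for k
    using card_mono[OF _ W[OF that]] d[OF that] by simp
  have "d i \<noteq> 0"
    using assms(3) card_0_eq[OF finite_subset[OF W[OF i] finite_atLeastAtMost]] d[OF i] by auto
  have "\<forall>k\<in>{1..L}. \<exists>q. q permutes {1..n k} \<and> q ` {1..d k} = W k \<and> (k = i \<longrightarrow> q (d k) = 1)"
  proof
    fix k assume k: "k \<in> {1..L}"
    have sub: "{1..d k} \<subseteq> {1..n k}" and card_eq: "card {1..d k} = card (W k)"
      using d_le[OF k] d[OF k] by auto
    show "\<exists>q. q permutes {1..n k} \<and> q ` {1..d k} = W k \<and> (k = i \<longrightarrow> q (d k) = 1)"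
    proof (cases "k = i")
      case True
      then have "d k \<in> {1..d k}" "1 \<in> W k"
        using \<open>d i \<noteq> 0\<close> assms(3) by auto
      then show ?thesis
        using ex_permutes_image_pointed[OF finite_atLeastAtMost sub W[OF k] card_eq] by blast
    next
      case False
      then show ?thesis
        using ex_permutes_image[OF finite_atLeastAtMost sub W[OF k] card_eq] by blast
    qed
  qed
  then have "\<exists>p. \<forall>k\<in>{1..L}. p k permutes {1..n k} \<and> p k ` {1..d k} = W k \<and> (k = i \<longrightarrow> p k (d k) = 1)"
    by (rule bchoice)
  then obtain p where p: "\<forall>k\<in>{1..L}. p k permutes {1..n k} \<and> p k ` {1..d k} = W k \<and> (k = i \<longrightarrow> p k (d k) = 1)"
    by (elim exE)
  then have p_permutes: "\<And>k. k \<in> {1..L} \<Longrightarrow> p k permutes {1..n k}"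
    and p_image: "\<And>k. k \<in> {1..L} \<Longrightarrow> p k ` {1..d k} = W k" and p_i: "p i (d i) = 1"
    using i by simp_all
  define U where "U = Sigma {1..L} (\<lambda>k. {1..d k})"
  define x where "x k j = (if (k, j) = (i, d i) then a else h k)" for k j
  have U_sub: "U \<subseteq> comp_index L n"
    using d_le by (force simp: U_def comp_index_def)
  define \<theta> where "\<theta> k j = (if (k, j) = (i, 1) then a else h k)" for k j :: nat
  have "p i j = 1 \<longleftrightarrow> j = d i" for j
    using permutes_inj[OF p_permutes[OF i]] p_i by (metis injD)
  then have hits_i1: "(k, p k j) = (i, 1) \<longleftrightarrow> (k, j) = (i, d i)" for k j
    by auto
  have \<theta>_p: "\<theta> k (p k j) = x k j" for k j
    unfolding \<theta>_def x_def hits_i1 ..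
  have Sigma_W: "Sigma {1..L} W = (\<lambda>(k, j). (k, p k j)) ` U"
  proof (intro set_eqI iffI)
    fix r assume "r \<in> Sigma {1..L} W"
    then obtain k j' where r: "r = (k, j')" "k \<in> {1..L}" "j' \<in> p k ` {1..d k}"
      using p_image by blast
    then obtain j where "j \<in> {1..d k}" "r = (k, p k j)"
      by blast
    then show "r \<in> (\<lambda>(k, j). (k, p k j)) ` U"
      using r(2) by (force simp: U_def)
  next
    fix r assume "r \<in> (\<lambda>(k, j). (k, p k j)) ` U"
    then obtain k j where "k \<in> {1..L}" "j \<in> {1..d k}" "r = (k, p k j)"
      by (auto simp: U_def)
    then show "r \<in> Sigma {1..L} W"
      using p_image by blast
  qed
  have "prob {\<omega>\<in>space M. \<forall>(k, j)\<in>Sigma {1..L} W. (if (k, j) = (i, 1) then a else h k) < T k j \<omega>}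
      = prob {\<omega>\<in>space M. \<forall>(k, j)\<in>U. x k j < T k (p k j) \<omega>}"
    unfolding \<theta>_def[symmetric] by (simp only: Sigma_W Set.ball_simps(9) split_def fst_conv snd_conv \<theta>_p)
  also have "\<dots> = prob {\<omega>\<in>space M. \<forall>(k, j)\<in>U. x k j < T k j \<omega>}"
    using p_permutes U_sub by (rule prob_survival_permute)
  also have "\<dots> = Chat (\<lambda>(k, j). if (k, j) \<in> U then Fbar k (x k j) else 1)"
    by (rule prob_survival_eq_Chat[OF U_sub])
  also have "\<dots> = Chat (\<lambda>(k, j). if (k, j) = (i, d i) then Fbar i a else if j \<le> d k then Fbar k (h k) else 1)"
  proof (rule copula_cong[OF copula_Chat])
    fix r assume "r \<in> comp_index L n"
    then obtain k j where r: "r = (k, j)" "(k, j) \<in> comp_index L n"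
      by (cases r) auto
    then show "(\<lambda>(k, j). if (k, j) \<in> U then Fbar k (x k j) else 1) r
      = (\<lambda>(k, j). if (k, j) = (i, d i) then Fbar i a else if j \<le> d k then Fbar k (h k) else 1) r"
      using \<open>d i \<noteq> 0\<close> by (auto simp: U_def x_def comp_index_def)
    show "(\<lambda>(k, j). if (k, j) \<in> U then Fbar k (x k j) else 1) r \<in> {0..1}"
      using r Fbar_in_unit by (auto simp: x_def)
  qed
  finally show ?thesis .
qed

lemma prob_survivors_event:
  assumes i: "i \<in> {1..L}" and c_le: "\<forall>k\<in>{1..L}. c k \<le> n k" and "1 \<le> c i" and "t \<le> a"
  shows "prob (survivors_event i c t a)
       = (\<Sum>v\<in>PiE {1..L} (\<lambda>k. {0..n k - c k}).
            (-1) ^ (\<Sum>k\<in>{1..L}. v k) * (\<Prod>k\<in>{1..L}. real (n k - c k choose v k)) *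
            Chat (\<lambda>(k, j). if (k, j) = (i, c i + v i) then Fbar i a
                           else if j \<le> c k + v k then Fbar k t else 1))"
proof -
  define S where "S = Sigma {1..L} (\<lambda>k. {1..c k})"
  define Up where "Up = {\<omega>\<in>space M. \<forall>(k, j)\<in>S. (if (k, j) = (i, 1) then a else t) < T k j \<omega>}"
  define R where "R = Sigma {1..L} (\<lambda>k. {c k<..n k})"
  define F where "F r = {\<omega>\<in>space M. t < T (fst r) (snd r) \<omega>}" for r
  define g where "g v = (-1) ^ (\<Sum>k\<in>{1..L}. v k) *
      Chat (\<lambda>(k, j). if (k, j) = (i, c i + v i) then Fbar i a else if j \<le> c k + v k then Fbar k t else 1)"
    for v :: "nat \<Rightarrow> nat"
  have "(i, 1) \<in> S"
    using i assms(3) by (simp add: S_def)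
  have Up_alt: "Up = {\<omega>\<in>space M. a < T i 1 \<omega> \<and> (\<forall>(k, j)\<in>S. t < T k j \<omega>)}"
    unfolding Up_def Ball_raised_threshold_iff[OF \<open>(i, 1) \<in> S\<close> assms(4)] ..
  have R_sub: "R \<subseteq> comp_index L n"
    by (auto simp: R_def comp_index_def)
  have "Up \<in> events"
    unfolding Up_def S_def using c_le by (intro events_comp_index) (force simp: comp_index_def)+
  moreover have "F r \<in> events" if "r \<in> R" for r
  proof -
    have "T (fst r) (snd r) \<in> borel_measurable M"
      using that R_sub by (intro measurable_T) auto
    then show ?thesis
      unfolding F_def by measurable
  qed
  moreover have "finite R"
    by (simp add: R_def)
  ultimately have "prob (Up \<inter> (\<Inter>r\<in>R. space M - F r)) = (\<Sum>Q\<in>Pow R. (-1) ^ card Q * prob (Up \<inter> \<Inter>(F ` Q)))"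
    by (intro prob_Int_INT_compl_incl_excl)
  also have "\<dots> = (\<Sum>Q\<in>Pow R. g (\<lambda>k\<in>{1..L}. card {j. (k, j) \<in> Q}))"
  proof (intro sum.cong refl)
    fix Q assume Q: "Q \<in> Pow R"
    define W where "W k = {1..c k} \<union> {j. (k, j) \<in> Q}" for k
    define v where "v = (\<lambda>k\<in>{1..L}. card {j. (k, j) \<in> Q})"
    have Q_slice: "{j. (k, j) \<in> Q} \<subseteq> {c k<..n k}" for k
      using Q by (auto simp: R_def)
    have W_sub: "W k \<subseteq> {1..n k}" if "k \<in> {1..L}" for k
      using Q_slice[of k] c_le that by (auto simp: W_def)
    have card_W: "card (W k) = c k + v k" if "k \<in> {1..L}" for k
    proof -
      have "finite {j. (k, j) \<in> Q}" "{1..c k} \<inter> {j. (k, j) \<in> Q} = {}"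
        using Q_slice[of k] finite_subset by fastforce+
      then show ?thesis
        using that by (simp add: W_def v_def card_Un_disjoint)
    qed
    have "card Q = card (Sigma {1..L} (\<lambda>k. {j. (k, j) \<in> Q}))"
      using Q by (intro arg_cong[where f = card]) (auto simp: R_def)
    also have "\<dots> = (\<Sum>k\<in>{1..L}. card {j. (k, j) \<in> Q})"
      using finite_subset[OF Q_slice finite_greaterThanAtMost] by (intro card_SigmaI) auto
    finally have card_Q: "card Q = (\<Sum>k\<in>{1..L}. v k)"
      by (simp add: v_def)
    have Sigma_W: "Sigma {1..L} W = S \<union> Q"
      using Q by (auto simp: W_def R_def S_def)
    have "Up \<inter> \<Inter>(F ` Q) = {\<omega>\<in>space M. a < T i 1 \<omega> \<and> (\<forall>(k, j)\<in>S \<union> Q. t < T k j \<omega>)}"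
      unfolding Up_alt by (auto simp: F_def case_prod_unfold)
    also have "\<dots> = {\<omega>\<in>space M. \<forall>(k, j)\<in>Sigma {1..L} W. (if (k, j) = (i, 1) then a else t) < T k j \<omega>}"
      unfolding Sigma_W Ball_raised_threshold_iff[OF UnI1[OF \<open>(i, 1) \<in> S\<close>] assms(4)] ..
    finally have Up_Q: "Up \<inter> \<Inter>(F ` Q)
        = {\<omega>\<in>space M. \<forall>(k, j)\<in>Sigma {1..L} W. (if (k, j) = (i, 1) then a else t) < T k j \<omega>}" .
    have "1 \<in> W i"
      using assms(3) by (simp add: W_def)
    have "prob (Up \<inter> \<Inter>(F ` Q))
        = Chat (\<lambda>(k, j). if (k, j) = (i, c i + v i) then Fbar i a else if j \<le> c k + v k then Fbar k t else 1)"
      unfolding Up_Q by (rule prob_survival_canonical[OF i W_sub \<open>1 \<in> W i\<close> card_W])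
    then show "(-1) ^ card Q * prob (Up \<inter> \<Inter>(F ` Q)) = g (\<lambda>k\<in>{1..L}. card {j. (k, j) \<in> Q})"
      unfolding g_def card_Q v_def[symmetric] by simp
  qed
  also have "\<dots> = (\<Sum>v\<in>PiE {1..L} (\<lambda>k. {0..card {c k<..n k}}).
                     of_nat (\<Prod>k\<in>{1..L}. card {c k<..n k} choose v k) * g v)"
    unfolding R_def by (rule sum_Pow_Sigma_by_counts) auto
  also have "\<dots> = (\<Sum>v\<in>PiE {1..L} (\<lambda>k. {0..n k - c k}).
            (-1) ^ (\<Sum>k\<in>{1..L}. v k) * (\<Prod>k\<in>{1..L}. real (n k - c k choose v k)) *
            Chat (\<lambda>(k, j). if (k, j) = (i, c i + v i) then Fbar i a
                           else if j \<le> c k + v k then Fbar k t else 1))"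
    by (simp add: g_def of_nat_prod mult_ac)
  also have "Up \<inter> (\<Inter>r\<in>R. space M - F r)
      = {\<omega>\<in>space M. a < T i 1 \<omega> \<and> (\<forall>(k, j)\<in>S. t < T k j \<omega>) \<and> (\<forall>(k, j)\<in>R. T k j \<omega> \<le> t)}"
    unfolding Up_alt by (auto simp: F_def case_prod_unfold not_less)
  also have "\<dots> = survivors_event i c t a"
  proof -
    have "S = {(k, j). k \<in> {1..L} \<and> j \<in> {1..n k} \<and> j \<le> c k}"
      by (auto simp: S_def intro: order_trans[OF _ bspec[OF c_le]])
    moreover have "R = {(k, j). k \<in> {1..L} \<and> j \<in> {1..n k} \<and> c k < j}"
      by (auto simp: R_def)
    ultimately show ?thesis
      by (auto simp: survivors_event_def)
  qed
  finally show ?thesis .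
qed


lemma prob_survivors_event_diff:
  assumes "i \<in> {1..L}" "\<forall>k\<in>{1..L}. c k \<le> n k" "1 \<le> c i" "t \<le> a" "t \<le> b"
  shows "prob (survivors_event i c t a) - prob (survivors_event i c t b)
       = (\<Sum>v\<in>PiE {1..L} (\<lambda>k. {0..n k - c k}).
            (-1) ^ (\<Sum>k\<in>{1..L}. v k) * (\<Prod>k\<in>{1..L}. real (n k - c k choose v k)) *
            (Chat (\<lambda>(k, j). if (k, j) = (i, c i + v i) then Fbar i a else if j \<le> c k + v k then Fbar k t else 1)
             - Chat (\<lambda>(k, j). if (k, j) = (i, c i + v i) then Fbar i b else if j \<le> c k + v k then Fbar k t else 1)))"
  unfolding prob_survivors_event[OF assms(1-4)] prob_survivors_event[OF assms(1-3,5)]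
  by (simp only: sum_subtractf[symmetric] right_diff_distrib)

end

theorem theorem1:
  fixes M :: "'a measure"
    and L :: nat and n :: "nat \<Rightarrow> nat"
    and T :: "nat \<Rightarrow> nat \<Rightarrow> 'a \<Rightarrow> real"
    and Fbar :: "nat \<Rightarrow> real \<Rightarrow> real"
    and Chat :: "(nat \<times> nat \<Rightarrow> real) \<Rightarrow> real"
    and i :: nat and m :: "nat \<Rightarrow> nat" and t \<delta> :: real
  assumes "prob_space M"
    and "L \<ge> 1"
    and rv: "\<And>k j. (k, j) \<in> comp_index L n \<Longrightarrow> T k j \<in> borel_measurable M"
    and rel: "\<And>k j s. (k, j) \<in> comp_index L n \<Longrightarrow>
                Fbar k s = measure M {\<omega>\<in>space M. T k j \<omega> > s}"
    and exch: "exchangeable_within_types M L n T"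
    and cop: "copula (comp_index L n) Chat"
    and surv: "\<And>s :: nat \<Rightarrow> nat \<Rightarrow> real.
                measure M {\<omega>\<in>space M. \<forall>(k, j)\<in>comp_index L n. T k j \<omega> > s k j}
                  = Chat (\<lambda>(k, j). Fbar k (s k j))"
    and "i \<in> {1..L}"
    and "\<And>k. k \<in> {1..L} \<Longrightarrow> k \<noteq> i \<Longrightarrow> m k \<le> n k"
    and "m i + 1 \<le> n i"
    and "t \<ge> 0" and "\<delta> > 0"
  shows "measure M {\<omega>\<in>space M.
            (\<forall>k\<in>{1..L} - {i}. \<forall>j\<in>{1..n k}.
                 (j \<le> m k \<longrightarrow> T k j \<omega> > t) \<and> (m k < j \<longrightarrow> T k j \<omega> \<le> t)) \<and>
            t < T i 1 \<omega> \<and> T i 1 \<omega> \<le> t + \<delta> \<and>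
            (\<forall>j\<in>{2..n i}. (j \<le> m i + 1 \<longrightarrow> T i j \<omega> > t) \<and> (m i + 1 < j \<longrightarrow> T i j \<omega> \<le> t))}
   = (\<Sum>jv\<in>PiE {1..L} (\<lambda>k. {0..(if k = i then n k - m k - 1 else n k - m k)}).
        (-1) ^ (\<Sum>k\<in>{1..L}. jv k) *
        (\<Prod>k\<in>{1..L}. real ((if k = i then n k - m k - 1 else n k - m k) choose jv k)) *
        (Chat (\<lambda>(k, j). if j \<le> m k + jv k + (if k = i then 1 else 0) then Fbar k t else 1)
         - Chat (\<lambda>(k, j). if k = i \<and> j = m i + jv i + 1 then Fbar i (t + \<delta>)
                          else if j \<le> m k + jv k then Fbar k t else 1)))"
proof -
  interpret exchangeable_survival_copula_model M L n T Fbar Chat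
    using assms(1,3-7) by (simp add: exchangeable_survival_copula_model_def survival_copula_model_def
        exchangeable_survival_copula_model_axioms_def survival_copula_model_axioms_def)
  define c where "c k = m k + (if k = i then 1 else 0)" for k
  have c_le: "\<forall>k\<in>{1..L}. c k \<le> n k"
    using assms(9,10) by (auto simp: c_def)
  have "1 \<le> c i" "1 \<le> n i" "t \<le> t + \<delta>"
    using assms(10,12) by (simp_all add: c_def)
  have event: "{\<omega>\<in>space M.
            (\<forall>k\<in>{1..L} - {i}. \<forall>j\<in>{1..n k}.
                 (j \<le> m k \<longrightarrow> T k j \<omega> > t) \<and> (m k < j \<longrightarrow> T k j \<omega> \<le> t)) \<and>
            t < T i 1 \<omega> \<and> T i 1 \<omega> \<le> t + \<delta> \<and>
            (\<forall>j\<in>{2..n i}. (j \<le> m i + 1 \<longrightarrow> T i j \<omega> > t) \<and> (m i + 1 < j \<longrightarrow> T i j \<omega> \<le> t))}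
      = survivors_event i c t t - survivors_event i c t (t + \<delta>)"
    unfolding survivors_event_def Ball_split_first[where L = L and n = n and i = i, OF assms(8) \<open>1 \<le> n i\<close>]
    by (auto simp: c_def)
  have "survivors_event i c t (t + \<delta>) \<subseteq> survivors_event i c t t"
    using assms(12) by (auto simp: survivors_event_def)
  then have diff: "prob (survivors_event i c t t - survivors_event i c t (t + \<delta>))
      = prob (survivors_event i c t t) - prob (survivors_event i c t (t + \<delta>))"
    using sets_survivors_event[OF assms(8) \<open>1 \<le> n i\<close>] by (simp add: finite_measure_Diff)
  have counts: "n k - c k = (if k = i then n k - m k - 1 else n k - m k)" for k
    by (simp add: c_def)
  have Chat_t: "Chat (\<lambda>(k, j). if (k, j) = (i, c i + v i) then Fbar i t else if j \<le> c k + v k then Fbar k t else 1)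
      = Chat (\<lambda>(k, j). if j \<le> m k + v k + (if k = i then 1 else 0) then Fbar k t else 1)" for v
    by (intro arg_cong[where f = Chat] ext) (simp add: c_def split: prod.splits)
  have Chat_t_\<delta>: "Chat (\<lambda>(k, j). if (k, j) = (i, c i + v i) then Fbar i (t + \<delta>)
                                 else if j \<le> c k + v k then Fbar k t else 1)
      = Chat (\<lambda>(k, j). if k = i \<and> j = m i + v i + 1 then Fbar i (t + \<delta>)
                         else if j \<le> m k + v k then Fbar k t else 1)" for v
    by (intro arg_cong[where f = Chat] ext) (simp add: c_def split: prod.splits)
  show ?thesis
    unfolding event diff prob_survivors_event_diff[OF assms(8) c_le \<open>1 \<le> c i\<close> order.refl \<open>t \<le> t + \<delta>\<close>]
      counts Chat_t Chat_t_\<delta> ..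
qed

end
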